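(* Let $L$ be an even hyperbolic lattice and $M$ an even negative definite lattice, and view $\mathbb H_L$ as the subset of $\mathbb H_{L\oplus M}$ consisting of vectors with zero projection onto $M\otimes\mathbb R$. Then there are chambers $\mathcal D_L$ of $L$ and $\mathcal D_{L\oplus M}$ of $L\oplus M$ such that $\overline{\mathcal D_L}=\overline{\mathcal D_{L\oplus M}}\cap\mathbb H_L$ (closures taken in $\mathbb H_L$, resp. $\mathbb H_{L\oplus M}$).
   Context: All lattices are even: a lattice is a free $\mathbb Z$-module $L$ of finite rank with a non-degenerate symmetric bilinear form $(x.y)\in\mathbb Z$ such that $x^2:=(x.x)$ is even for all $x$. $L$ is hyperbolic if its signature is $(1,\mathrm{rk}L-1)$. A root is a vector $r\in L$ with $r^2=-2$. For hyperbolic $L$, fix a connected component $\mathcal P_L$ of $\{x\in L\otimes\mathbb R: x^2>0\}$ and let $\mathbb H_L=\{x\in\mathcal P_L: x^2=1\}$ (for $L\oplus M$ take the component containing $\mathcal P_L$). The chambers are the connected components of $\mathbb H_L\setminus\bigcup_r r^\perp$ (union over all roots $r$ of $L$). *)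

theory Defs
  imports "HOL-Analysis.Analysis"
begin

text \<open>A lattice of rank n is given by its Gram matrix G (integer n x n matrix) w.r.t. a
  Z-basis; L is identified with the integer vectors of real^'n, and L \<otimes> R with real^'n.\<close>

definition bil :: "int^'n^'n \<Rightarrow> real^'n \<Rightarrow> real^'n \<Rightarrow> real" where
  "bil G x y = (\<Sum>i\<in>UNIV. \<Sum>j\<in>UNIV. x$i * real_of_int (G$i$j) * y$j)"

definition int_vec :: "real^'n \<Rightarrow> bool" where
  "int_vec x \<longleftrightarrow> (\<forall>i. x$i \<in> \<int>)"

definition even_lattice :: "int^'n^'n \<Rightarrow> bool" where
  "even_lattice G \<longleftrightarrow> transpose G = G \<and> det G \<noteq> 0 \<and>
     (\<forall>x. int_vec x \<longrightarrow> (\<exists>k::int. bil G x x = of_int (2*k)))"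

definition pos_index :: "int^'n^'n \<Rightarrow> nat" where
  "pos_index G = Max {dim V |V. subspace V \<and> (\<forall>x\<in>V. x \<noteq> 0 \<longrightarrow> bil G x x > 0)}"

definition neg_index :: "int^'n^'n \<Rightarrow> nat" where
  "neg_index G = Max {dim V |V. subspace V \<and> (\<forall>x\<in>V. x \<noteq> 0 \<longrightarrow> bil G x x < 0)}"

definition hyperbolic :: "int^'n^'n \<Rightarrow> bool" where
  "hyperbolic G \<longleftrightarrow> pos_index G = 1 \<and> neg_index G = CARD('n) - 1"

definition neg_definite :: "int^'n^'n \<Rightarrow> bool" where
  "neg_definite G \<longleftrightarrow> (\<forall>x. x \<noteq> 0 \<longrightarrow> bil G x x < 0)"

definition roots :: "int^'n^'n \<Rightarrow> (real^'n) set" where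
  "roots G = {r. int_vec r \<and> bil G r r = -2}"

definition hyp :: "int^'n^'n \<Rightarrow> (real^'n) set \<Rightarrow> (real^'n) set" where
  "hyp G P = {x\<in>P. bil G x x = 1}"

definition chambers :: "int^'n^'n \<Rightarrow> (real^'n) set \<Rightarrow> (real^'n) set set" where
  "chambers G P = components (hyp G P - (\<Union>r\<in>roots G. {x. bil G r x = 0}))"

definition osum :: "int^'n^'n \<Rightarrow> int^'m^'m \<Rightarrow> int^('n+'m)^('n+'m)" where
  "osum A B = (\<chi> i j. case (i, j) of (Inl a, Inl b) \<Rightarrow> A$a$b
                                 | (Inr a, Inr b) \<Rightarrow> B$a$b
                                 | _ \<Rightarrow> 0)"

definition emb :: "real^'n::finite \<Rightarrow> real^('n+'m::finite)" where
  "emb x = (\<chi> i. case i of Inl a \<Rightarrow> x$a | Inr _ \<Rightarrow> 0)"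

end

theory Submission
  imports Defs
begin

text \<open>
  A point x0 of H_L on no root hyperplane of L lies in a chamber whose closure consists of the
  points of H_L weakly on the side of x0 of every root hyperplane. Perturb x0 to y = (x0, eps v)
  with v in M (x) R off all root hyperplanes of M. A root (a, b) of L (+) M with a and b nonzero
  has a^2 = -2 - b^2 >= 0, as M is even and negative definite; such an a pairs with the whole
  cone P with one sign, and since 2 (x.x0)^2 - x^2 is positive definite, (a.x0)^2 dominates
  (eps v.b)^2 for small eps, so (a, b).y has the sign of a.x0. The roots (a, 0) are those of L,
  and the roots (0, b) vanish on H_L. Hence y is off all root hyperplanes of L (+) M and its
  closed chamber meets H_L exactly in the closed chamber of x0.
\<close>

section \<open>Gram matrices\<close>

lemma bil_add_left: "bil G (x + y) z = bil G x z + bil G y z"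
  by (simp add: bil_def algebra_simps sum.distrib)

lemma bil_add_right: "bil G z (x + y) = bil G z x + bil G z y"
  by (simp add: bil_def algebra_simps sum.distrib)

lemma bil_diff_left: "bil G (x - y) z = bil G x z - bil G y z"
  by (simp add: bil_def algebra_simps sum_subtractf)

lemma bil_diff_right: "bil G z (x - y) = bil G z x - bil G z y"
  by (simp add: bil_def algebra_simps sum_subtractf)

lemma bil_scaleR_left: "bil G (c *\<^sub>R x) z = c * bil G x z"
  by (simp add: bil_def algebra_simps sum_distrib_left)

lemma bil_scaleR_right: "bil G z (c *\<^sub>R x) = c * bil G z x"
  by (simp add: bil_def algebra_simps sum_distrib_left)

lemma bil_zero_left [simp]: "bil G 0 z = 0"
  by (simp add: bil_def)

lemma bil_zero_right [simp]: "bil G z 0 = 0"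
  by (simp add: bil_def)

lemmas bil_linear_simps =
  bil_add_left bil_add_right bil_diff_left bil_diff_right bil_scaleR_left bil_scaleR_right

lemma bil_eq_inner: "bil G x y = inner x ((\<chi> i j. real_of_int (G$i$j)) *v y)"
  by (simp add: bil_def inner_vec_def matrix_vector_mult_def sum_distrib_left mult.assoc)

lemma bil_sym:
  assumes "transpose G = G"
  shows "bil G x y = bil G y x"
proof -
  have "G$i$j = G$j$i" for i j
    by (metis assms transpose_def vec_lambda_beta)
  then show ?thesis
    unfolding bil_def by (subst sum.swap) (simp add: mult.commute mult.left_commute)
qed

lemma continuous_on_bil [continuous_intros]:
  "continuous_on S f \<Longrightarrow> continuous_on S g \<Longrightarrow> continuous_on S (\<lambda>x. bil G (f x) (g x))"
  unfolding bil_def by (intro continuous_intros)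

lemma even_lattice_sym: "even_lattice G \<Longrightarrow> transpose G = G"
  by (simp add: even_lattice_def)

lemma neg_definite_nonpos: "neg_definite G \<Longrightarrow> bil G x x \<le> 0"
  by (cases "x = 0") (auto simp: neg_definite_def less_imp_le)

lemma cauchy_schwarz_neg_definite:
  assumes "transpose G = G" and "neg_definite G"
  shows "(bil G c d)\<^sup>2 \<le> bil G c c * bil G d d"
proof (cases "c = 0")
  case False
  then have cc: "bil G c c < 0"
    using assms(2) by (simp add: neg_definite_def)
  define d' where "d' = d - (bil G c d / bil G c c) *\<^sub>R c"
  have "bil G d' d' \<le> 0"
    using assms(2) by (rule neg_definite_nonpos)
  moreover have "bil G d' d' = bil G d d - (bil G c d)\<^sup>2 / bil G c c"
    using cc bil_sym[OF assms(1), of d c]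
    by (simp add: d'_def bil_linear_simps power2_eq_square field_simps)
  ultimately show ?thesis
    using cc by (simp add: field_simps mult.commute)
qed simp

definition nondegenerate :: "int^'n^'n \<Rightarrow> bool" where
  "nondegenerate G \<longleftrightarrow> (\<forall>a. a \<noteq> 0 \<longrightarrow> (\<exists>z. bil G a z \<noteq> 0))"

lemma even_lattice_nondegenerate:
  fixes G :: "int^'n^'n"
  assumes "even_lattice G"
  shows "nondegenerate G"
  unfolding nondegenerate_def
proof (intro allI impI, rule ccontr)
  fix a :: "real^'n"
  assume "a \<noteq> 0" and "\<not> (\<exists>z. bil G a z \<noteq> 0)"
  define Gr where "Gr = (\<chi> i j. real_of_int (G$i$j))"
  have "inner (a v* Gr) z = 0" for z
    using \<open>\<not> (\<exists>z. bil G a z \<noteq> 0)\<close> by (simp add: bil_eq_inner dot_lmul_matrix Gr_def)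
  then have "transpose Gr *v a = 0"
    by (metis inner_eq_zero_iff transpose_matrix_vector)
  moreover have "det (transpose Gr) = real_of_int (det G)"
    unfolding det_transpose by (simp add: Gr_def det_def)
  then have "det (transpose Gr) \<noteq> 0"
    using assms by (simp add: even_lattice_def)
  ultimately have "a = 0"
    by (metis inj_matrix_vector_mult invertible_det_nz injD matrix_vector_mult_0_right)
  with \<open>a \<noteq> 0\<close> show False ..
qed

lemma countable_roots: "countable (roots (G :: int^'n^'n))"
proof -
  have "roots G \<subseteq> range (\<lambda>v::int^'n. \<chi> i. real_of_int (v$i))"
  proof
    fix r
    assume "r \<in> roots G"
    then have "\<forall>i. \<exists>k. r$i = real_of_int k"
      by (auto simp: roots_def int_vec_def elim: Ints_cases)
    then obtain f where "\<forall>i. r$i = real_of_int (f i)"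
      by metis
    then show "r \<in> range (\<lambda>v::int^'n. \<chi> i. real_of_int (v$i))"
      by (auto intro: image_eqI[of _ _ "\<chi> i. f i"] simp: vec_eq_iff)
  qed
  then show ?thesis
    by (rule countable_subset) simp
qed

lemma int_vec_norm_ge_1:
  assumes "int_vec a" and "a \<noteq> 0"
  shows "1 \<le> norm a"
proof -
  obtain i where "a$i \<noteq> 0"
    using assms(2) by (metis vec_eq_iff zero_index)
  moreover have "a$i \<in> \<int>"
    using assms(1) by (simp add: int_vec_def)
  ultimately have "1 \<le> \<bar>a$i\<bar>"
    by (simp add: Ints_nonzero_abs_ge1)
  then show ?thesis
    using component_le_norm_cart[of a i] by linarith
qed

lemma even_neg_definite_le:
  assumes "even_lattice G" and "neg_definite G" and "int_vec b" and "b \<noteq> 0"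
  shows "bil G b b \<le> -2"
proof -
  obtain k :: int where k: "bil G b b = of_int (2 * k)"
    using assms(1,3) by (auto simp: even_lattice_def)
  moreover have "bil G b b < 0"
    using assms(2,4) by (simp add: neg_definite_def)
  ultimately show ?thesis
    by simp
qed

section \<open>Lorentzian forms\<close>

definition lorentzian :: "int^'n^'n \<Rightarrow> bool" where
  "lorentzian G \<longleftrightarrow> (\<forall>x y. 0 < bil G x x \<longrightarrow> bil G x y = 0 \<longrightarrow> bil G y y \<le> 0)"

lemma reverse_cauchy_schwarz:
  assumes "transpose G = G" and "lorentzian G" and "0 < bil G x x"
  shows "bil G y y * bil G x x \<le> (bil G x y)\<^sup>2"
proof -
  define y' where "y' = y - (bil G x y / bil G x x) *\<^sub>R x"
  have "bil G x y' = 0"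
    using assms(3) by (simp add: y'_def bil_linear_simps)
  then have "bil G y' y' \<le> 0"
    using assms(2,3) unfolding lorentzian_def by blast
  moreover have "bil G y' y' = bil G y y - (bil G x y)\<^sup>2 / bil G x x"
    using assms(3) bil_sym[OF assms(1), of y x]
    by (simp add: y'_def bil_linear_simps power2_eq_square field_simps)
  ultimately show ?thesis
    using assms(3) by (simp add: field_simps)
qed

lemma pairing_timelike_nonzero:
  assumes symmetric: "transpose G = G" and lorentzian: "lorentzian G" and "nondegenerate G"
    and xx: "0 < bil G x x" and "a \<noteq> 0" and "0 \<le> bil G a a"
  shows "bil G x a \<noteq> 0"
proof
  assume xa: "bil G x a = 0"
  then have "bil G a a = 0"
    using lorentzian xx \<open>0 \<le> bil G a a\<close> unfolding lorentzian_def by force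
  \<comment> \<open>tilting the isotropic a inside the orthogonal complement of x yields a vector of
    positive norm there\<close>
  obtain z where "bil G a z \<noteq> 0"
    using \<open>nondegenerate G\<close> \<open>a \<noteq> 0\<close> unfolding nondegenerate_def by blast
  define z' where "z' = z - (bil G x z / bil G x x) *\<^sub>R x"
  have xz': "bil G x z' = 0"
    using xx by (simp add: z'_def bil_linear_simps)
  define p where "p = bil G a z'"
  define q where "q = bil G z' z'"
  have "p \<noteq> 0"
    using \<open>bil G a z \<noteq> 0\<close> xa bil_sym[OF symmetric, of a x] by (simp add: p_def z'_def bil_linear_simps)
  have "q \<le> 0"
    using lorentzian xx xz' unfolding lorentzian_def q_def by blast
  define s where "s = 1 / (1 - q)"
  have "0 < s" and "0 < 2 + s * q"
    using \<open>q \<le> 0\<close> by (simp_all add: s_def field_simps)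
  define y where "y = a + (s * p) *\<^sub>R z'"
  have "bil G x y = 0"
    using xa xz' by (simp add: y_def bil_linear_simps)
  moreover have "bil G y y = s * p\<^sup>2 * (2 + s * q)"
    using \<open>bil G a a = 0\<close> bil_sym[OF symmetric, of z' a]
    by (simp add: y_def bil_linear_simps p_def[symmetric] q_def[symmetric] power2_eq_square algebra_simps)
  then have "0 < bil G y y"
    using \<open>0 < s\<close> \<open>p \<noteq> 0\<close> \<open>0 < 2 + s * q\<close> by simp
  ultimately show False
    using lorentzian xx unfolding lorentzian_def by force
qed

lemma majorant_positive_definite:
  fixes G :: "int^'n^'n"
  assumes symmetric: "transpose G = G" and "lorentzian G" and "nondegenerate G"
    and x0: "bil G x0 x0 = 1"
  shows "\<exists>\<delta>>0. \<forall>a. \<delta> * (norm a)\<^sup>2 \<le> 2 * (bil G a x0)\<^sup>2 - bil G a a"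
proof -
  define Q where "Q a = 2 * (bil G a x0)\<^sup>2 - bil G a a" for a
  have Q_pos: "0 < Q a" if "a \<noteq> 0" for a
  proof (rule ccontr)
    assume "\<not> 0 < Q a"
    moreover have "bil G a a \<le> (bil G a x0)\<^sup>2"
      using reverse_cauchy_schwarz[OF symmetric \<open>lorentzian G\<close>, of x0 a] x0 bil_sym[OF symmetric, of a x0]
      by simp
    ultimately have "(bil G a x0)\<^sup>2 \<le> 0" and "0 \<le> bil G a a"
      using zero_le_power2[of "bil G a x0"] unfolding Q_def by linarith+
    then have "bil G x0 a = 0" and "0 \<le> bil G a a"
      using bil_sym[OF symmetric, of a x0] by simp_all
    then show False
      using pairing_timelike_nonzero[OF symmetric \<open>lorentzian G\<close> \<open>nondegenerate G\<close>, of x0 a] x0 \<open>a \<noteq> 0\<close>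
      by simp
  qed
  have Q_scaleR: "Q (c *\<^sub>R a) = c\<^sup>2 * Q a" for c a
    by (simp add: Q_def bil_linear_simps power2_eq_square algebra_simps)
  have "continuous_on (sphere 0 1) Q"
    unfolding Q_def by (intro continuous_intros)
  moreover have "sphere (0::real^'n) 1 \<noteq> {}"
    by simp
  ultimately obtain m where m: "m \<in> sphere 0 1" and m_min: "\<forall>u\<in>sphere 0 1. Q m \<le> Q u"
    using continuous_attains_inf[OF compact_sphere] by blast
  have "Q m * (norm a)\<^sup>2 \<le> Q a" for a
  proof (cases "a = 0")
    case False
    then have "Q m \<le> Q ((1 / norm a) *\<^sub>R a)"
      using m_min by simp
    with False show ?thesis
      by (simp add: Q_scaleR power2_eq_square field_simps)
  qed (simp add: Q_def)
  moreover have "m \<noteq> 0"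
    using m by auto
  then have "0 < Q m"
    by (rule Q_pos)
  ultimately show ?thesis
    by (intro exI[of _ "Q m"]) (auto simp: Q_def mult.commute)
qed

lemma dim_le_pos_index:
  fixes G :: "int^'n^'n"
  assumes "subspace V" and "\<forall>x\<in>V. x \<noteq> 0 \<longrightarrow> 0 < bil G x x"
  shows "dim V \<le> pos_index G"
proof -
  have "finite {dim V |V. subspace V \<and> (\<forall>x\<in>V. x \<noteq> 0 \<longrightarrow> bil G x x > 0)}"
    by (rule finite_subset[of _ "{..CARD('n)}"]) (auto simp: dim_subset_UNIV_cart)
  then show ?thesis
    unfolding pos_index_def using assms by (auto intro: Max_ge)
qed

lemma hyperbolic_imp_lorentzian:
  fixes G :: "int^'n^'n"
  assumes symmetric: "transpose G = G" and "hyperbolic G"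
  shows "lorentzian G"
  unfolding lorentzian_def
proof (intro allI impI, rule ccontr)
  fix x y
  assume xx: "0 < bil G x x" and xy: "bil G x y = 0" and "\<not> bil G y y \<le> 0"
  then have yy: "0 < bil G y y" by simp
  have yx: "bil G y x = 0"
    using xy bil_sym[OF symmetric] by metis
  have pos: "0 < bil G v v" if "v \<in> span {x, y}" "v \<noteq> 0" for v
  proof -
    obtain s t where v: "v = s *\<^sub>R x + t *\<^sub>R y"
      using \<open>v \<in> span {x, y}\<close> by (auto simp: span_insert span_singleton algebra_simps)
    have "bil G v v = s\<^sup>2 * bil G x x + t\<^sup>2 * bil G y y"
      using xy yx by (simp add: v bil_linear_simps power2_eq_square algebra_simps)
    moreover have "s \<noteq> 0 \<or> t \<noteq> 0"
      using \<open>v \<noteq> 0\<close> v by auto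
    ultimately show ?thesis
      using xx yy by (auto intro: add_pos_nonneg add_nonneg_pos)
  qed
  have "x \<noteq> y"
    using xx xy by auto
  have "x \<notin> span {y}"
    using xx yx by (auto simp: span_singleton bil_linear_simps)
  then have "independent {x, y}"
    using yy by (auto simp: independent_insert)
  then have "dim (span {x, y}) = 2"
    using \<open>x \<noteq> y\<close> by (simp add: dim_span dim_eq_card_independent)
  then have "2 \<le> pos_index G"
    using dim_le_pos_index[of "span {x, y}" G] pos by simp
  then show False
    using \<open>hyperbolic G\<close> by (simp add: hyperbolic_def)
qed

section \<open>Orthogonal sums\<close>

definition projL :: "real^('n::finite+'m::finite) \<Rightarrow> real^'n" where
  "projL y = (\<chi> a. y$Inl a)"

definition projR :: "real^('n::finite+'m::finite) \<Rightarrow> real^'m" where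
  "projR y = (\<chi> a. y$Inr a)"

definition join :: "real^'n::finite \<Rightarrow> real^'m::finite \<Rightarrow> real^('n+'m)" where
  "join a b = (\<chi> i. case i of Inl j \<Rightarrow> a$j | Inr j \<Rightarrow> b$j)"

lemma projL_join [simp]: "projL (join a b) = a"
  by (simp add: projL_def join_def vec_eq_iff)

lemma projR_join [simp]: "projR (join a b) = b"
  by (simp add: projR_def join_def vec_eq_iff)

lemma emb_eq_join: "emb x = join x 0"
  by (simp add: emb_def join_def vec_eq_iff split: sum.splits)

lemma join_add: "join a b + join c d = join (a + c) (b + d)"
  by (simp add: join_def vec_eq_iff split: sum.splits)

lemma scaleR_join: "t *\<^sub>R join a b = join (t *\<^sub>R a) (t *\<^sub>R b)"
  by (simp add: join_def vec_eq_iff split: sum.splits)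

lemma int_vec_join_iff: "int_vec y \<longleftrightarrow> int_vec (projL y) \<and> int_vec (projR y)"
  by (auto simp: int_vec_def projL_def projR_def) (metis sum.exhaust)

lemma bil_osum: "bil (osum A B) y z = bil A (projL y) (projL z) + bil B (projR y) (projR z)"
  unfolding bil_def osum_def projL_def projR_def
  by (simp add: UNIV_Plus_UNIV[symmetric] sum.Plus del: UNIV_Plus_UNIV)

lemma bil_osum_join: "bil (osum A B) r (join a b) = bil A (projL r) a + bil B (projR r) b"
  by (simp add: bil_osum)

lemma bil_osum_emb: "bil (osum A B) r (emb x) = bil A (projL r) x"
  by (simp add: emb_eq_join bil_osum_join)

lemma emb_mem_hyp:
  assumes "emb ` P \<subseteq> PLM" and "x \<in> hyp A P"
  shows "emb x \<in> hyp (osum A B) PLM"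
  using assms by (auto simp: hyp_def bil_osum emb_eq_join)

lemma osum_sym:
  assumes "transpose A = A" and "transpose B = B"
  shows "transpose (osum A B) = osum A B"
proof -
  have "A$i$j = A$j$i" for i j
    by (metis assms(1) transpose_def vec_lambda_beta)
  moreover have "B$i$j = B$j$i" for i j
    by (metis assms(2) transpose_def vec_lambda_beta)
  ultimately show ?thesis
    by (simp add: transpose_def osum_def vec_eq_iff split: sum.splits)
qed

lemma lorentzian_osum:
  assumes symA: "transpose A = A" and symB: "transpose B = B"
    and "lorentzian A" and "neg_definite B"
  shows "lorentzian (osum A B)"
  unfolding lorentzian_def
proof (intro allI impI)
  fix y z
  assume yy: "0 < bil (osum A B) y y" and yz: "bil (osum A B) y z = 0"
  define a c b d where "a = projL y" and "c = projR y" and "b = projL z" and "d = projR z"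
  have cc: "bil B c c \<le> 0" and dd: "bil B d d \<le> 0"
    using \<open>neg_definite B\<close> by (simp_all add: neg_definite_nonpos)
  have yy': "0 < bil A a a + bil B c c" and ab: "bil A a b = - bil B c d"
    using yy yz by (simp_all add: bil_osum a_def b_def c_def d_def)
  then have aa: "0 < bil A a a"
    using cc by linarith
  have "bil A b b * bil A a a \<le> (bil A a b)\<^sup>2"
    using reverse_cauchy_schwarz[OF symA \<open>lorentzian A\<close> aa] .
  also have "\<dots> \<le> bil B c c * bil B d d"
    using cauchy_schwarz_neg_definite[OF symB \<open>neg_definite B\<close>] ab by simp
  finally have "(bil A b b + bil B d d) * bil A a a \<le> bil B d d * (bil A a a + bil B c c)"
    by (simp add: algebra_simps)
  also have "\<dots> \<le> 0"
    using dd yy' by (simp add: mult_nonpos_nonneg)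
  finally show "bil (osum A B) z z \<le> 0"
    using aa by (simp add: bil_osum b_def d_def mult_le_0_iff)
qed

lemma roots_osum_iff:
  "r \<in> roots (osum A B) \<longleftrightarrow>
     int_vec (projL r) \<and> int_vec (projR r) \<and>
     bil A (projL r) (projL r) + bil B (projR r) (projR r) = -2"
  by (auto simp: roots_def bil_osum int_vec_join_iff)

lemma roots_osum_projL_nonneg:
  assumes "r \<in> roots (osum A B)" and "projR r \<noteq> 0"
    and "even_lattice B" and "neg_definite B"
  shows "0 \<le> bil A (projL r) (projL r)"
  using assms even_neg_definite_le[of B "projR r"] by (auto simp: roots_osum_iff)

section \<open>Chambers\<close>

lemma closure_bil_nonzero:
  assumes "bil G r z \<noteq> 0"
  shows "closure {x. bil G r x \<noteq> 0} = UNIV"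
proof -
  have "y \<in> closure {x. bil G r x \<noteq> 0}" for y
  proof (cases "bil G r y = 0")
    case True
    have "(\<lambda>n. y + inverse (real (Suc n)) *\<^sub>R z) \<longlonglongrightarrow> y + 0 *\<^sub>R z"
      by (intro tendsto_intros LIMSEQ_inverse_real_of_nat)
    moreover have "bil G r (y + inverse (real (Suc n)) *\<^sub>R z) \<noteq> 0" for n
      using True assms by (simp add: bil_linear_simps)
    ultimately show ?thesis
      unfolding closure_sequential by (intro exI[of _ "\<lambda>n. y + inverse (real (Suc n)) *\<^sub>R z"]) simp
  qed (simp add: closure_subset[THEN subsetD])
  then show ?thesis
    by blast
qed

lemma exists_off_root_hyperplanes:
  fixes U :: "(real^'n) set" and G :: "int^'n^'n"
  assumes "open U" and "U \<noteq> {}"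
  shows "\<exists>x\<in>U. \<forall>r\<in>roots G. bil G r x \<noteq> 0"
proof -
  define \<G> where "\<G> = (\<lambda>r. {x. bil G r x \<noteq> 0}) ` roots G"
  have "UNIV \<subseteq> closure (\<Inter>\<G>)"
  proof (rule Baire)
    show "countable \<G>"
      by (simp add: \<G>_def countable_roots)
  next
    fix T
    assume "T \<in> \<G>"
    then obtain r where "r \<in> roots G" and T: "T = {x. bil G r x \<noteq> 0}"
      by (auto simp: \<G>_def)
    then have "closure T = UNIV"
      using closure_bil_nonzero[of G r r] by (simp add: roots_def)
    moreover have "open T"
      unfolding T by (intro open_Collect_neq continuous_intros)
    ultimately show "openin (top_of_set UNIV) T \<and> UNIV \<subseteq> closure T"
      by simp
  qed simp
  then have "U \<inter> \<Inter>\<G> \<noteq> {}"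
    using assms open_Int_closure_eq_empty by blast
  then show ?thesis
    by (auto simp: \<G>_def)
qed

lemma connected_nonvanishing_same_sign:
  fixes g :: "'a::topological_space \<Rightarrow> real"
  assumes "connected C" and "continuous_on C g" and "\<forall>u\<in>C. g u \<noteq> 0"
    and "x \<in> C" and "z \<in> C"
  shows "0 < g x * g z"
proof (rule ccontr)
  assume "\<not> 0 < g x * g z"
  then have "g x \<le> 0 \<and> 0 \<le> g z \<or> g z \<le> 0 \<and> 0 \<le> g x"
    by (auto simp: zero_less_mult_iff not_less)
  moreover have "connected (g ` C)"
    using assms(2,1) by (rule connected_continuous_image)
  ultimately have "0 \<in> g ` C"
    using assms(4,5) unfolding connected_iff_interval by (metis imageI)
  then show False
    using assms(3) by auto
qed

definition to_hyp :: "int^'n^'n \<Rightarrow> real^'n \<Rightarrow> real^'n" where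
  "to_hyp G w = (1 / sqrt (bil G w w)) *\<^sub>R w"

lemma bil_to_hyp_right: "bil G r (to_hyp G w) = bil G r w / sqrt (bil G w w)"
  by (simp add: to_hyp_def bil_linear_simps)

definition chamber_at :: "int^'n^'n \<Rightarrow> (real^'n) set \<Rightarrow> real^'n \<Rightarrow> (real^'n) set" where
  "chamber_at G P x0 = connected_component_set (hyp G P - (\<Union>r\<in>roots G. {x. bil G r x = 0})) x0"

definition same_side :: "int^'n^'n \<Rightarrow> real^'n \<Rightarrow> (real^'n) set" where
  "same_side G x0 = {x. \<forall>r\<in>roots G. 0 \<le> bil G r x0 * bil G r x}"

lemma chamber_at_mem_chambers:
  assumes "x0 \<in> hyp G P" and "\<forall>r\<in>roots G. bil G r x0 \<noteq> 0"
  shows "chamber_at G P x0 \<in> chambers G P"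
  using assms by (auto simp: chamber_at_def chambers_def components_iff)

lemma closed_same_side: "closed (same_side G x0)"
  unfolding same_side_def Collect_ball_eq
  by (intro closed_INT ballI closed_Collect_le continuous_intros)

lemma same_side_segment_nonzero:
  assumes "x \<in> same_side G x0" and "r \<in> roots G" and "bil G r x0 \<noteq> 0"
    and "0 < t" and "t \<le> 1"
  shows "bil G r ((1 - t) *\<^sub>R x + t *\<^sub>R x0) \<noteq> 0"
proof -
  have "bil G r x0 * bil G r ((1 - t) *\<^sub>R x + t *\<^sub>R x0) =
      (1 - t) * (bil G r x0 * bil G r x) + t * (bil G r x0)\<^sup>2"
    by (simp add: bil_linear_simps power2_eq_square algebra_simps)
  moreover have "0 \<le> (1 - t) * (bil G r x0 * bil G r x)"
    using assms(1,2,5) by (simp add: same_side_def)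
  moreover have "0 < t * (bil G r x0)\<^sup>2"
    using assms(3,4) by simp
  ultimately show ?thesis
    by auto
qed

lemma chamber_at_subset_same_side: "chamber_at G P x0 \<subseteq> same_side G x0"
proof
  fix x
  assume x: "x \<in> chamber_at G P x0"
  then have x0: "x0 \<in> chamber_at G P x0"
    unfolding chamber_at_def by (metis connected_component_in connected_component_refl_eq mem_Collect_eq)
  have "0 < bil G r x0 * bil G r x" if "r \<in> roots G" for r
  proof (rule connected_nonvanishing_same_sign[where C = "chamber_at G P x0"])
    have "chamber_at G P x0 \<subseteq> hyp G P - (\<Union>r\<in>roots G. {x. bil G r x = 0})"
      unfolding chamber_at_def by (rule connected_component_subset)
    then show "\<forall>u\<in>chamber_at G P x0. bil G r u \<noteq> 0"
      using that by blast
  qed (use x x0 in \<open>auto simp: chamber_at_def intro: continuous_intros\<close>)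
  then show "x \<in> same_side G x0"
    by (auto simp: same_side_def less_imp_le)
qed

locale lorentz_cone =
  fixes G :: "int^'n^'n" and P :: "(real^'n) set"
  assumes symmetric: "transpose G = G" and lorentzian: "lorentzian G"
    and component: "P \<in> components {x. 0 < bil G x x}"
begin

lemma bil_commute: "bil G x y = bil G y x"
  using bil_sym[OF symmetric] .

lemma bil_self_pos: "x \<in> P \<Longrightarrow> 0 < bil G x x"
  using in_components_subset[OF component] by blast

lemma open_cone: "open P"
  by (rule open_components[OF _ component]) (intro open_Collect_less continuous_intros)

lemma segment_pos_imp_mem:
  assumes "x \<in> P" and "closed_segment x y \<subseteq> {z. 0 < bil G z z}"
  shows "y \<in> P"
  using components_maximal[OF component connected_segment assms(2)] assms(1) by blast

lemma pairing_pos: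
  assumes "x \<in> P" and "y \<in> P"
  shows "0 < bil G x y"
proof -
  have "0 < bil G x y * bil G y y"
  proof (rule connected_nonvanishing_same_sign[where C = P])
    show "\<forall>z\<in>P. bil G z y \<noteq> 0"
    proof
      fix z
      assume "z \<in> P"
      have "bil G z z * bil G y y \<le> (bil G y z)\<^sup>2"
        using reverse_cauchy_schwarz[OF symmetric lorentzian bil_self_pos[OF \<open>y \<in> P\<close>]] .
      moreover have "0 < bil G z z * bil G y y"
        using bil_self_pos \<open>y \<in> P\<close> \<open>z \<in> P\<close> by simp
      ultimately show "bil G z y \<noteq> 0"
        using bil_commute[of y z] by auto
    qed
  qed (use assms component in \<open>auto intro: continuous_intros in_components_connected\<close>)
  then show ?thesis
    using bil_self_pos[OF \<open>y \<in> P\<close>] by (simp add: zero_less_mult_iff)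
qed

lemma convex_cone: "convex P"
  unfolding convex_contains_segment
proof (intro ballI)
  fix x y
  assume x: "x \<in> P" and y: "y \<in> P"
  have "closed_segment x z \<subseteq> {z. 0 < bil G z z}" if "z \<in> closed_segment x y" for z
  proof -
    have "0 < bil G u u" if "u \<in> closed_segment x y" for u
    proof -
      obtain t where t: "0 \<le> t" "t \<le> 1" and u: "u = (1 - t) *\<^sub>R x + t *\<^sub>R y"
        using \<open>u \<in> closed_segment x y\<close> by (auto simp: in_segment)
      have "bil G u u = (1 - t)\<^sup>2 * bil G x x + t\<^sup>2 * bil G y y + 2 * t * (1 - t) * bil G x y"
        using bil_commute[of x y] by (simp add: u bil_linear_simps power2_eq_square algebra_simps)
      moreover have "0 < (1 - t)\<^sup>2 * bil G x x + t\<^sup>2 * bil G y y"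
        using bil_self_pos[OF x] bil_self_pos[OF y] by (cases "t = 0") (auto intro: add_nonneg_pos)
      moreover have "0 \<le> 2 * t * (1 - t) * bil G x y"
        using t pairing_pos[OF x y] by simp
      ultimately show ?thesis
        by linarith
    qed
    then show ?thesis
      using that subset_closed_segment[of x z x y] by auto
  qed
  then show "closed_segment x y \<subseteq> P"
    using segment_pos_imp_mem[OF x] by blast
qed

lemma scaleR_mem:
  assumes "x \<in> P" and "0 < c"
  shows "c *\<^sub>R x \<in> P"
proof (rule segment_pos_imp_mem[OF \<open>x \<in> P\<close>], rule subsetI)
  fix z
  assume "z \<in> closed_segment x (c *\<^sub>R x)"
  then obtain u where "0 \<le> u" "u \<le> 1" and z: "z = (1 - u + u * c) *\<^sub>R x"
    by (auto simp: in_segment algebra_simps)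
  moreover have "0 < 1 - u + u * c"
    using \<open>0 \<le> u\<close> \<open>u \<le> 1\<close> \<open>0 < c\<close>
    by (cases "u = 1") (auto intro: add_pos_nonneg)
  ultimately show "z \<in> {z. 0 < bil G z z}"
    using bil_self_pos[OF \<open>x \<in> P\<close>] by (simp add: bil_linear_simps)
qed

lemma to_hyp_mem: "w \<in> P \<Longrightarrow> to_hyp G w \<in> hyp G P"
  using bil_self_pos[of w] scaleR_mem[of w]
  by (simp add: hyp_def to_hyp_def bil_linear_simps power2_eq_square[symmetric])

lemma exists_generic_point: "\<exists>x0\<in>hyp G P. \<forall>r\<in>roots G. bil G r x0 \<noteq> 0"
proof -
  obtain w where "w \<in> P" and w: "\<forall>r\<in>roots G. bil G r w \<noteq> 0"
    using exists_off_root_hyperplanes[OF open_cone in_components_nonempty[OF component]] by blast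
  then show ?thesis
    using to_hyp_mem bil_self_pos[OF \<open>w \<in> P\<close>] by (intro bexI[of _ "to_hyp G w"]) (auto simp: bil_to_hyp_right)
qed

lemma pairing_same_sign:
  assumes "nondegenerate G" and "x \<in> P" and "x0 \<in> P" and "a \<noteq> 0" and "0 \<le> bil G a a"
  shows "0 < bil G a x0 * bil G a x"
proof (rule connected_nonvanishing_same_sign[where C = P])
  show "\<forall>u\<in>P. bil G a u \<noteq> 0"
    using pairing_timelike_nonzero[OF symmetric lorentzian \<open>nondegenerate G\<close> bil_self_pos assms(4,5)]
    by (metis bil_commute)
qed (use assms component convex_connected convex_cone in \<open>auto intro: continuous_intros\<close>)

lemma same_side_subset_closure_chamber_at:
  assumes x0: "x0 \<in> hyp G P" and x0_generic: "\<forall>r\<in>roots G. bil G r x0 \<noteq> 0"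
  shows "hyp G P \<inter> same_side G x0 \<subseteq> closure (chamber_at G P x0)"
proof
  fix x
  assume x: "x \<in> hyp G P \<inter> same_side G x0"
  define w where "w t = (1 - t) *\<^sub>R x + t *\<^sub>R x0" for t :: real
  define f where "f t = to_hyp G (w t)" for t
  have w_mem: "w t \<in> P" if "t \<in> {0..1}" for t
    using convex_cone x x0 that by (auto simp: w_def hyp_def convex_alt)
  have w_pos: "0 < bil G (w t) (w t)" if "t \<in> {0..1}" for t
    using bil_self_pos w_mem that by simp
  have f_cont: "continuous_on {0..1} f"
    unfolding f_def to_hyp_def w_def
    by (intro continuous_intros) (use w_pos in \<open>fastforce simp: w_def\<close>)
  have "bil G r (f t) \<noteq> 0" if "t \<in> {0<..1}" "r \<in> roots G" for t r
  proof -
    have "bil G r (w t) \<noteq> 0"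
      using same_side_segment_nonzero[of x G x0 r t] x x0_generic that by (simp add: w_def)
    moreover have "0 < bil G (w t) (w t)"
      using w_pos that by simp
    ultimately show ?thesis
      by (simp add: f_def bil_to_hyp_right)
  qed
  moreover have "f t \<in> hyp G P" if "t \<in> {0..1}" for t
    using to_hyp_mem w_mem that by (simp add: f_def)
  ultimately have "f ` {0<..1} \<subseteq> hyp G P - (\<Union>r\<in>roots G. {x. bil G r x = 0})"
    by auto
  moreover have "f 1 = x0" and "f 0 = x"
    using x0 x by (auto simp: f_def w_def to_hyp_def hyp_def)
  then have "x0 \<in> f ` {0<..1}"
    by (metis greaterThanAtMost_iff image_eqI order_refl zero_less_one)
  moreover have "connected (f ` {0<..1})"
    by (rule connected_continuous_image[OF continuous_on_subset[OF f_cont]]) auto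
  ultimately have "f ` {0<..1} \<subseteq> chamber_at G P x0"
    unfolding chamber_at_def by (intro connected_component_maximal) auto
  then have "f ` {0<..1} \<subseteq> closure (chamber_at G P x0)"
    using closure_subset by blast
  then have "f ` closure {0<..1} \<subseteq> closure (chamber_at G P x0)"
    by (intro image_closure_subset continuous_on_subset[OF f_cont]) auto
  then show "x \<in> closure (chamber_at G P x0)"
    using \<open>f 0 = x\<close> by auto
qed

lemma closure_chamber_at:
  assumes "x0 \<in> hyp G P" and "\<forall>r\<in>roots G. bil G r x0 \<noteq> 0"
  shows "hyp G P \<inter> closure (chamber_at G P x0) = hyp G P \<inter> same_side G x0"
  using same_side_subset_closure_chamber_at[OF assms]
    closure_minimal[OF chamber_at_subset_same_side closed_same_side]
  by blast

end

section \<open>Perturbing a generic point into the orthogonal sum\<close>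

lemma pos_mult_add_if_power2_less:
  fixes c d :: real
  assumes "d\<^sup>2 < c\<^sup>2"
  shows "0 < c * (c + d)"
proof -
  have "\<bar>d\<bar> < \<bar>c\<bar>"
    using assms by (metis abs_ge_zero power2_abs power2_less_imp_less)
  then show ?thesis
    by (cases "0 < c") (auto simp: abs_less_iff zero_less_mult_iff)
qed

lemma exists_pos_power2_mult_less:
  fixes V \<mu> :: real
  assumes "0 \<le> V" and "0 < \<mu>"
  shows "\<exists>\<epsilon>>0. \<epsilon>\<^sup>2 * V < \<mu>"
proof -
  have "(sqrt (\<mu> / (V + 1)))\<^sup>2 * V < \<mu>"
    using assms by (simp add: field_simps)
  then show ?thesis
    using assms by (intro exI[of _ "sqrt (\<mu> / (V + 1))"]) simp
qed

lemma mixed_root_pairing_sign: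
  assumes "transpose B = B" and "neg_definite B"
    and root: "bil A a a + bil B b b = -2" and a_nonneg: "0 \<le> bil A a a"
    and majorant: "\<delta> + bil A a a \<le> 2 * (bil A a x0)\<^sup>2"
    and small: "\<epsilon>\<^sup>2 * - bil B v v < \<delta> / 4" "\<epsilon>\<^sup>2 * - bil B v v \<le> 1 / 2"
  shows "0 < bil A a x0 * (bil A a x0 + \<epsilon> * bil B b v)"
proof (rule pos_mult_add_if_power2_less)
  define E where "E = \<epsilon>\<^sup>2 * - bil B v v"
  have "(\<epsilon> * bil B b v)\<^sup>2 = \<epsilon>\<^sup>2 * (bil B b v)\<^sup>2"
    by (simp add: power_mult_distrib)
  also have "\<dots> \<le> \<epsilon>\<^sup>2 * (bil B b b * bil B v v)"
    using cauchy_schwarz_neg_definite[OF assms(1,2)] by (simp add: mult_left_mono)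
  also have "\<dots> = 2 * E + E * bil A a a"
  proof -
    have bb: "bil B b b = - 2 - bil A a a"
      using root by linarith
    show ?thesis
      unfolding bb by (simp add: E_def algebra_simps)
  qed
  also have "\<dots> < (\<delta> + bil A a a) / 2"
    using small a_nonneg mult_right_mono[of E "1/2" "bil A a a"] by (simp add: E_def)
  also have "\<dots> \<le> (bil A a x0)\<^sup>2"
    using majorant by simp
  finally show "(\<epsilon> * bil B b v)\<^sup>2 < (bil A a x0)\<^sup>2" .
qed

lemma osum_root_pairing_perturbed:
  fixes GL :: "int^'n^'n" and GM :: "int^'m^'m"
  assumes "even_lattice GM" and "neg_definite GM"
    and "0 < \<delta>" and majorant: "\<forall>a. \<delta> * (norm a)\<^sup>2 \<le> 2 * (bil GL a x0)\<^sup>2 - bil GL a a"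
    and x0_generic: "\<forall>a\<in>roots GL. bil GL a x0 \<noteq> 0"
    and v_generic: "\<forall>b\<in>roots GM. bil GM b v \<noteq> 0"
    and "0 < \<epsilon>" and small: "\<epsilon>\<^sup>2 * - bil GM v v < \<delta> / 4" "\<epsilon>\<^sup>2 * - bil GM v v \<le> 1 / 2"
    and r: "r \<in> roots (osum GL GM)"
  shows "bil (osum GL GM) r (join x0 (\<epsilon> *\<^sub>R v)) \<noteq> 0"
    and "projL r \<noteq> 0 \<Longrightarrow> 0 < bil GL (projL r) x0 * bil (osum GL GM) r (join x0 (\<epsilon> *\<^sub>R v))"
proof -
  define a b where "a = projL r" and "b = projR r"
  have pairing: "bil (osum GL GM) r (join x0 (\<epsilon> *\<^sub>R v)) = bil GL a x0 + \<epsilon> * bil GM b v"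
    by (simp add: a_def b_def bil_osum_join bil_linear_simps)
  have root: "int_vec a" "int_vec b" "bil GL a a + bil GM b b = -2"
    using r by (simp_all add: roots_osum_iff a_def b_def)
  have compatible: "0 < bil GL a x0 * bil (osum GL GM) r (join x0 (\<epsilon> *\<^sub>R v))" if "a \<noteq> 0"
  proof (cases "b = 0")
    case True
    then have "a \<in> roots GL"
      using root by (simp add: roots_def)
    then show ?thesis
      using x0_generic True by (auto simp: pairing zero_less_mult_iff)
  next
    case False
    have "0 \<le> bil GL a a"
      using roots_osum_projL_nonneg[OF r _ assms(1,2)] False by (simp add: a_def b_def)
    moreover have "\<delta> + bil GL a a \<le> 2 * (bil GL a x0)\<^sup>2"
    proof -
      have "1 \<le> (norm a)\<^sup>2"
        using int_vec_norm_ge_1[OF root(1) that] by (simp add: one_le_power)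
      then have "\<delta> \<le> \<delta> * (norm a)\<^sup>2"
        using \<open>0 < \<delta>\<close> by simp
      then show ?thesis
        using majorant[rule_format, of a] by linarith
    qed
    ultimately show ?thesis
      using mixed_root_pairing_sign[OF even_lattice_sym[OF assms(1)] assms(2) root(3)] small
      by (simp add: pairing)
  qed
  then show "projL r \<noteq> 0 \<Longrightarrow> 0 < bil GL (projL r) x0 * bil (osum GL GM) r (join x0 (\<epsilon> *\<^sub>R v))"
    by (simp add: a_def)
  show "bil (osum GL GM) r (join x0 (\<epsilon> *\<^sub>R v)) \<noteq> 0"
  proof (cases "a = 0")
    case True
    then have "b \<in> roots GM"
      using root by (simp add: roots_def)
    then show ?thesis
      using v_generic True \<open>0 < \<epsilon>\<close> by (simp add: pairing)
  qed (use compatible in force)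
qed

lemma join_mem_cone:
  assumes "lorentz_cone (osum A B) Q" and "emb x \<in> Q"
    and "bil B w w \<le> 0" and "0 < bil A x x + bil B w w"
  shows "join x w \<in> Q"
proof (rule lorentz_cone.segment_pos_imp_mem[OF assms(1,2)], rule subsetI)
  fix z
  assume "z \<in> closed_segment (emb x) (join x w)"
  then obtain u where "0 \<le> u" "u \<le> 1" and "z = join x (u *\<^sub>R w)"
    by (auto simp: in_segment emb_eq_join scaleR_join join_add algebra_simps)
  moreover have "bil B w w \<le> u\<^sup>2 * bil B w w"
    using \<open>0 \<le> u\<close> \<open>u \<le> 1\<close> assms(3)
    by (metis mult_le_cancel_right1 not_le order.refl power_le_one zero_le_power2)
  ultimately show "z \<in> {z. 0 < bil (osum A B) z z}"
    using assms(4) by (simp add: bil_osum bil_linear_simps power2_eq_square)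
qed

lemma exists_compatible_point:
  fixes GL :: "int^'n^'n" and GM :: "int^'m^'m"
  assumes "lorentz_cone GL P" and "nondegenerate GL"
    and "even_lattice GM" and "neg_definite GM"
    and "lorentz_cone (osum GL GM) PLM" and "emb ` P \<subseteq> PLM"
    and x0: "x0 \<in> hyp GL P" and x0_generic: "\<forall>a\<in>roots GL. bil GL a x0 \<noteq> 0"
  shows "\<exists>y\<in>hyp (osum GL GM) PLM. \<forall>r\<in>roots (osum GL GM). bil (osum GL GM) r y \<noteq> 0 \<and>
           (projL r \<noteq> 0 \<longrightarrow> 0 < bil GL (projL r) x0 * bil (osum GL GM) r y)"
proof -
  interpret L: lorentz_cone GL P by fact
  interpret LM: lorentz_cone "osum GL GM" PLM by fact
  have x0x0: "bil GL x0 x0 = 1"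
    using x0 by (simp add: hyp_def)
  obtain v where v_generic: "\<forall>b\<in>roots GM. bil GM b v \<noteq> 0"
    using exists_off_root_hyperplanes[OF open_UNIV] by blast
  obtain \<delta> where "0 < \<delta>" and majorant: "\<forall>a. \<delta> * (norm a)\<^sup>2 \<le> 2 * (bil GL a x0)\<^sup>2 - bil GL a a"
    using majorant_positive_definite[OF L.symmetric L.lorentzian \<open>nondegenerate GL\<close> x0x0] by blast
  define V where "V = - bil GM v v"
  have "0 \<le> V"
    using neg_definite_nonpos[OF \<open>neg_definite GM\<close>] by (simp add: V_def)
  obtain \<epsilon> where "0 < \<epsilon>" and small: "\<epsilon>\<^sup>2 * V < min (\<delta> / 4) (1 / 2)"
    using exists_pos_power2_mult_less[OF \<open>0 \<le> V\<close>, of "min (\<delta> / 4) (1 / 2)"] \<open>0 < \<delta>\<close> by auto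
  define y0 where "y0 = join x0 (\<epsilon> *\<^sub>R v)"
  have "y0 \<in> PLM"
    unfolding y0_def
  proof (rule join_mem_cone[OF \<open>lorentz_cone (osum GL GM) PLM\<close>])
    show "emb x0 \<in> PLM"
      using x0 \<open>emb ` P \<subseteq> PLM\<close> by (auto simp: hyp_def)
    show "bil GM (\<epsilon> *\<^sub>R v) (\<epsilon> *\<^sub>R v) \<le> 0"
      using neg_definite_nonpos[OF \<open>neg_definite GM\<close>] .
    show "0 < bil GL x0 x0 + bil GM (\<epsilon> *\<^sub>R v) (\<epsilon> *\<^sub>R v)"
      using small x0x0 by (simp add: bil_linear_simps V_def power2_eq_square algebra_simps)
  qed
  have compatible: "bil (osum GL GM) r y0 \<noteq> 0 \<and> (projL r \<noteq> 0 \<longrightarrow> 0 < bil GL (projL r) x0 * bil (osum GL GM) r y0)"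
    if "r \<in> roots (osum GL GM)" for r
    using osum_root_pairing_perturbed[OF assms(3,4) \<open>0 < \<delta>\<close> majorant x0_generic v_generic \<open>0 < \<epsilon>\<close> _ _ that]
      small by (simp add: y0_def V_def)
  show ?thesis
  proof (intro bexI ballI)
    fix r
    assume "r \<in> roots (osum GL GM)"
    then show "bil (osum GL GM) r (to_hyp (osum GL GM) y0) \<noteq> 0 \<and>
        (projL r \<noteq> 0 \<longrightarrow> 0 < bil GL (projL r) x0 * bil (osum GL GM) r (to_hyp (osum GL GM) y0))"
      using compatible LM.bil_self_pos[OF \<open>y0 \<in> PLM\<close>] by (simp add: bil_to_hyp_right divide_pos_pos)
  qed (rule LM.to_hyp_mem[OF \<open>y0 \<in> PLM\<close>])
qed

lemma (in lorentz_cone) osum_root_same_side: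
  fixes B :: "int^'m^'m"
  assumes "nondegenerate G" and "even_lattice B" and "neg_definite B"
    and "x0 \<in> P" and "x \<in> P" and side: "x \<in> same_side G x0"
    and r: "r \<in> roots (osum G B)" and "projL r \<noteq> 0"
  shows "0 \<le> bil G (projL r) x0 * bil G (projL r) x"
proof (cases "projR r = 0")
  case True
  then have "projL r \<in> roots G"
    using r by (simp add: roots_osum_iff roots_def[of G])
  then show ?thesis
    using side by (simp add: same_side_def)
next
  case False
  then have "0 \<le> bil G (projL r) (projL r)"
    using roots_osum_projL_nonneg[OF r _ assms(2,3)] by simp
  then show ?thesis
    using pairing_same_sign[OF assms(1,5,4) \<open>projL r \<noteq> 0\<close>] by simp
qed

lemma emb_mem_same_side_iff:
  fixes GL :: "int^'n^'n" and GM :: "int^'m^'m"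
  assumes "lorentz_cone GL P" and "nondegenerate GL"
    and "even_lattice GM" and "neg_definite GM"
    and "x0 \<in> P" and "x \<in> P"
    and compatible: "\<forall>r\<in>roots (osum GL GM). projL r \<noteq> 0 \<longrightarrow> 0 < bil GL (projL r) x0 * bil (osum GL GM) r y"
  shows "emb x \<in> same_side (osum GL GM) y \<longleftrightarrow> x \<in> same_side GL x0"
proof
  assume side: "emb x \<in> same_side (osum GL GM) y"
  show "x \<in> same_side GL x0"
    unfolding same_side_def mem_Collect_eq
  proof
    fix a
    assume a: "a \<in> roots GL"
    then have "join a 0 \<in> roots (osum GL GM)" and "a \<noteq> 0"
      by (auto simp: roots_osum_iff roots_def[of GL] int_vec_def)
    then have "0 < bil GL a x0 * bil (osum GL GM) (join a 0) y"
      and "0 \<le> bil (osum GL GM) (join a 0) y * bil GL a x"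
      using compatible side by (auto simp: same_side_def bil_osum_emb)
    then show "0 \<le> bil GL a x0 * bil GL a x"
      by (auto simp: zero_less_mult_iff zero_le_mult_iff)
  qed
next
  assume side: "x \<in> same_side GL x0"
  interpret L: lorentz_cone GL P by fact
  show "emb x \<in> same_side (osum GL GM) y"
    unfolding same_side_def mem_Collect_eq
  proof
    fix r
    assume r: "r \<in> roots (osum GL GM)"
    show "0 \<le> bil (osum GL GM) r y * bil (osum GL GM) r (emb x)"
    proof (cases "projL r = 0")
      case False
      have "0 \<le> bil GL (projL r) x0 * bil GL (projL r) x"
        using L.osum_root_same_side[OF assms(2-6) side r False] .
      moreover have "0 < bil GL (projL r) x0 * bil (osum GL GM) r y"
        using compatible r False by blast
      ultimately show ?thesis
        by (auto simp: bil_osum_emb zero_less_mult_iff zero_le_mult_iff)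
    qed (simp add: bil_osum_emb)
  qed
qed

theorem lemma2p5:
  fixes GL :: "int^'n^'n" and GM :: "int^'m^'m"
    and P :: "(real^'n) set" and PLM :: "(real^('n+'m)) set"
  assumes "even_lattice GL" and "hyperbolic GL"
    and "even_lattice GM" and "neg_definite GM"
    and "P \<in> components {x. bil GL x x > 0}"
    and "PLM \<in> components {y. bil (osum GL GM) y y > 0}" and "emb ` P \<subseteq> PLM"
  shows "\<exists>DL DLM. DL \<in> chambers GL P \<and> DLM \<in> chambers (osum GL GM) PLM \<and>
     emb ` (hyp GL P \<inter> closure DL) = hyp (osum GL GM) PLM \<inter> closure DLM \<inter> emb ` hyp GL P"
proof -
  have symmetric: "transpose GL = GL" "transpose GM = GM"
    using assms(1,3) by (simp_all add: even_lattice_sym)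
  then have lorentzian: "lorentzian GL"
    using assms(2) by (simp add: hyperbolic_imp_lorentzian)
  interpret L: lorentz_cone GL P
    using symmetric lorentzian assms(5) by unfold_locales
  interpret LM: lorentz_cone "osum GL GM" PLM
    using osum_sym[OF symmetric] lorentzian_osum[OF symmetric lorentzian assms(4)] assms(6) by unfold_locales
  have nondegenerate: "nondegenerate GL"
    using assms(1) by (rule even_lattice_nondegenerate)
  obtain x0 where x0: "x0 \<in> hyp GL P" and x0_generic: "\<forall>a\<in>roots GL. bil GL a x0 \<noteq> 0"
    using L.exists_generic_point by blast
  then obtain y where y: "y \<in> hyp (osum GL GM) PLM"
    and y_generic: "\<forall>r\<in>roots (osum GL GM). bil (osum GL GM) r y \<noteq> 0"
    and compatible: "\<forall>r\<in>roots (osum GL GM). projL r \<noteq> 0 \<longrightarrow> 0 < bil GL (projL r) x0 * bil (osum GL GM) r y"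
    using exists_compatible_point[OF L.lorentz_cone_axioms nondegenerate assms(3,4)
        LM.lorentz_cone_axioms assms(7)] by blast
  have "emb ` (hyp GL P \<inter> same_side GL x0) = hyp (osum GL GM) PLM \<inter> same_side (osum GL GM) y \<inter> emb ` hyp GL P"
    using emb_mem_same_side_iff[OF L.lorentz_cone_axioms nondegenerate assms(3,4) _ _ compatible]
      emb_mem_hyp[OF assms(7)] x0 by (auto simp: hyp_def)
  then show ?thesis
    using L.closure_chamber_at[OF x0 x0_generic] LM.closure_chamber_at[OF y y_generic]
      chamber_at_mem_chambers[OF x0 x0_generic] chamber_at_mem_chambers[OF y y_generic]
    by metis
qed

end
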